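(* Let $q$ be a prime power, $k\ge1$, $n=4k$, and $\delta\in\mathbb{F}_{q^n}$. Let $$g(x)=\sum_{i=1}^{k}x^{q^{2(i-1)}+q^{2(i-1)+2k}}.$$ Then for $a\in\mathbb{F}_q$, $a\neq0$, the polynomial $f(x)=g(x^q-x+\delta)+ax$ permutes $\mathbb{F}_{q^n}$ if and only if $\mathrm{Tr}(\delta)\neq a$.
   Context: $\mathrm{Tr}$ denotes the trace function from $\mathbb{F}_{q^n}$ to $\mathbb{F}_q$, $\mathrm{Tr}(x)=x+x^q+\cdots+x^{q^{n-1}}$. A polynomial permutes $\mathbb{F}_{q^n}$ if it induces a bijection of $\mathbb{F}_{q^n}$. *)

theory Defs
  imports Main "HOL-Number_Theory.Prime_Powers"
begin

(* The finite field F_{q^n} is modelled as a finite field type 'a with CARD('a) = q^n.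
   Its subfield F_q is {x. x^q = x}. *)

definition subfield_Fq :: "nat \<Rightarrow> 'a::field set" where
  "subfield_Fq q = {x. x ^ q = x}"

definition trace_ext :: "nat \<Rightarrow> nat \<Rightarrow> 'a::field \<Rightarrow> 'a" where
  "trace_ext q n x = (\<Sum>i<n. x ^ (q ^ i))"

definition g_poly :: "nat \<Rightarrow> nat \<Rightarrow> 'a::field \<Rightarrow> 'a" where
  "g_poly q k x = (\<Sum>i=1..k. x ^ (q ^ (2*(i-1)) + q ^ (2*(i-1) + 2*k)))"

end

theory Submission
  imports Defs "HOL-Number_Theory.Residues" "HOL-Algebra.Multiplicative_Group"
    "HOL-Computational_Algebra.Polynomial"
begin

text \<open>
  Let \<open>S\<close> be the trace from GF(q^4k) to GF(q^2), so that \<open>Tr = S + S^q\<close>. For \<open>c\<close> in GF(q^2)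
  and \<open>e = c^q - c\<close>, the form \<open>g\<close> satisfies \<open>g(z + e) = g(z) + e S(z) + k e^2\<close>, hence
  \<open>f(y + c) - f(y) = e (S(y)^q - S(y) + S(\<delta>)) + k e^2 + a c\<close>.
  Since \<open>g\<close> takes values in GF(q^2), a collision \<open>f(x) = f(y)\<close> forces \<open>c = x - y\<close> into GF(q^2);
  applying the Frobenius \<open>x \<mapsto> x^q\<close> to the collision equation (where \<open>e^q = -e\<close>) and subtracting
  leaves \<open>e (Tr(\<delta>) - a) = 0\<close>, with \<open>e \<noteq> 0\<close> because \<open>a c \<noteq> 0\<close>.
  Conversely, if \<open>Tr(\<delta>) = a\<close>, take \<open>c\<close> in GF(q^2) but not in GF(q): by counting, the additive map
  \<open>y \<mapsto> S(y)^q - S(y)\<close> is onto \<open>{w. w^q = -w}\<close>, so some \<open>y\<close> makes the difference above vanish.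
\<close>

lemma field_power_card_eq_self:
  fixes x :: "'a::{field,finite}"
  shows "x ^ card (UNIV :: 'a set) = x"
proof (cases "x = 0")
  case False
  define G :: "'a monoid" where "G = \<lparr>carrier = UNIV - {0}, monoid.mult = (*), one = 1\<rparr>"
  have "group G"
  proof (rule groupI)
    show "\<exists>y\<in>carrier G. y \<otimes>\<^bsub>G\<^esub> z = \<one>\<^bsub>G\<^esub>" if "z \<in> carrier G" for z
      using that by (intro bexI[of _ "inverse z"]) (auto simp: G_def)
  qed (auto simp: G_def mult.assoc)
  moreover have "x [^]\<^bsub>G\<^esub> n = x ^ n" for n
    by (induction n) (simp_all add: G_def)
  moreover have "Coset.order G = card (UNIV :: 'a set) - 1"
    by (simp add: Coset.order_def G_def card_Diff_singleton)
  ultimately have "x ^ (card (UNIV :: 'a set) - 1) = 1"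
    using group.pow_order_eq_1[of G x] False by (simp add: G_def)
  moreover have "card (UNIV :: 'a set) = Suc (card (UNIV :: 'a set) - 1)"
    using finite_UNIV_card_ge_0[where 'a = 'a] by simp
  ultimately show ?thesis
    by (metis power_Suc mult_1_right)
qed (use finite_UNIV_card_ge_0[where 'a = 'a] in simp)

lemma primepow_card_power_add:
  fixes x y :: "'a::{field,finite}"
  assumes "primepow q" and "card (UNIV :: 'a set) = q ^ n"
  shows "(x + y) ^ q = x ^ q + y ^ q"
proof -
  obtain p r where p: "prime p" "q = p ^ r" using assms(1) by (auto simp: primepow_def)
  have char: "prime CHAR('a)"
    by (rule prime_CHAR_semidom[OF finite_imp_CHAR_pos]) simp
  moreover have "CHAR('a) dvd p ^ (r * n)"
    using CHAR_dvd_CARD[where 'a='a] assms(2) p(2) by (simp add: power_mult)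
  ultimately have "CHAR('a) = p"
    using p(1) prime_dvd_power primes_dvd_imp_eq by blast
  then show ?thesis
    using freshmans_dream'[OF char] p(2) by blast
qed

lemma frobenius_exponent_pos:
  assumes add: "\<And>x y :: 'a::field. (x + y) ^ q = x ^ q + y ^ q"
  shows "q > 0"
proof (rule ccontr)
  assume "\<not> q > 0"
  then have "(1 :: 'a) = 1 + 1" using add[of 0 0] by simp
  then show False by (metis add_cancel_left_right one_neq_zero)
qed

lemma frobenius_iter_add:
  fixes x y :: "'a::field"
  assumes add: "\<And>x y :: 'a. (x + y) ^ q = x ^ q + y ^ q"
  shows "(x + y) ^ (q ^ j) = x ^ (q ^ j) + y ^ (q ^ j)"
proof (induction j arbitrary: x y)
  case (Suc j)
  have "(x + y) ^ (q ^ Suc j) = ((x + y) ^ q) ^ (q ^ j)" by (simp add: power_mult)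
  also have "\<dots> = (x ^ q) ^ (q ^ j) + (y ^ q) ^ (q ^ j)" by (simp add: add Suc)
  also have "\<dots> = x ^ (q ^ Suc j) + y ^ (q ^ Suc j)" by (simp add: power_mult)
  finally show ?case .
qed simp

lemma frobenius_iter_diff:
  fixes x y :: "'a::field"
  assumes add: "\<And>x y :: 'a. (x + y) ^ q = x ^ q + y ^ q"
  shows "(x - y) ^ (q ^ j) = x ^ (q ^ j) - y ^ (q ^ j)"
  using frobenius_iter_add[OF add, of "x - y" y j] by (simp add: algebra_simps)

lemma frobenius_iter_sum:
  fixes f :: "'b \<Rightarrow> 'a::field"
  assumes add: "\<And>x y :: 'a. (x + y) ^ q = x ^ q + y ^ q"
  shows "(\<Sum>i\<in>A. f i) ^ (q ^ j) = (\<Sum>i\<in>A. f i ^ (q ^ j))"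
  using frobenius_exponent_pos[OF add]
  by (induction A rule: infinite_finite_induct) (simp_all add: frobenius_iter_add[OF add])

lemma frobenius_of_nat:
  assumes add: "\<And>x y :: 'a::field. (x + y) ^ q = x ^ q + y ^ q"
  shows "(of_nat m :: 'a) ^ q = of_nat m"
proof (induction m)
  case 0 then show ?case using frobenius_exponent_pos[OF add] by simp
next
  case (Suc m) then show ?case using add[of "of_nat m" 1] by (simp add: add.commute)
qed

lemma power_power_fixed:
  fixes w :: "'a::monoid_mult"
  assumes "w ^ r = w"
  shows "w ^ (r ^ m) = w"
  by (induction m) (simp_all add: power_mult assms flip: power_mult_distrib)

section \<open>Counting roots and images of linearized polynomials\<close>

lemma card_roots_linearized_le:
  fixes w :: "nat \<Rightarrow> 'a::field"
  assumes q: "q \<ge> 2" and "m < N" and "w m \<noteq> 0" and top: "\<And>j. m < j \<Longrightarrow> j < N \<Longrightarrow> w j = 0"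
  shows "card {x. (\<Sum>j<N. w j * x ^ (q ^ j)) = 0} \<le> q ^ m"
proof -
  define p where "p = (\<Sum>j<N. monom (w j) (q ^ j))"
  have eval: "poly p x = (\<Sum>j<N. w j * x ^ (q ^ j))" for x
    by (simp add: p_def poly_sum poly_monom)
  have "coeff p (q ^ m) = (\<Sum>j<N. if j = m then w j else 0)"
    using q by (simp add: p_def coeff_sum coeff_monom power_inject_exp)
  also have "\<dots> = w m" using \<open>m < N\<close> by simp
  finally have "p \<noteq> 0" using \<open>w m \<noteq> 0\<close> by auto
  moreover have "degree p \<le> q ^ m" unfolding p_def
  proof (rule degree_sum_le)
    fix j assume "j \<in> {..<N}"
    show "degree (monom (w j) (q ^ j)) \<le> q ^ m"
    proof (cases "j \<le> m")
      case True
      then have "q ^ j \<le> q ^ m" using q by (simp add: power_increasing)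
      then show ?thesis using degree_monom_le[of "w j" "q ^ j"] by linarith
    next
      case False then show ?thesis using top \<open>j \<in> {..<N}\<close> by simp
    qed
  qed simp
  ultimately show ?thesis using card_poly_roots_bound[of p] by (simp add: eval)
qed

lemma card_power_eq_scalar_mult_le:
  fixes c :: "'a::field"
  assumes "q \<ge> 2"
  shows "card {x. x ^ q = c * x} \<le> q"
proof -
  have "card {x. (\<Sum>j<2. (if j = 0 then - c else 1) * x ^ (q ^ j)) = 0} \<le> q ^ 1"
    by (rule card_roots_linearized_le) (use assms in auto)
  moreover have "(\<Sum>j<2. (if j = 0 then - c else 1) * x ^ (q ^ j)) = 0 \<longleftrightarrow> x ^ q = c * x" for x
    by (simp add: numeral_2_eq_2)
  ultimately show ?thesis by simp
qed

lemma card_UNIV_le_card_range_mult_card_kernel: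
  fixes A :: "'a::{ab_group_add,finite} \<Rightarrow> 'b::ab_group_add"
  assumes add: "\<And>x y. A (x + y) = A x + A y"
  shows "card (UNIV :: 'a set) \<le> card (range A) * card {x. A x = 0}"
proof -
  have fiber: "card {x. A x = b} \<le> card {x. A x = 0}" if "b \<in> range A" for b
  proof -
    obtain x0 where x0: "A x0 = b" using \<open>b \<in> range A\<close> by auto
    have "A (x - x0) = A x - A x0" for x using add[of "x - x0" x0] by simp
    then have "{x. A x = b} \<subseteq> (\<lambda>z. z + x0) ` {x. A x = 0}"
      using x0 by (auto intro!: image_eqI[of _ _ "_ - x0"])
    then have "card {x. A x = b} \<le> card ((\<lambda>z. z + x0) ` {x. A x = 0})" by (intro card_mono) auto
    also have "\<dots> \<le> card {x. A x = 0}" by (rule card_image_le) simp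
    finally show ?thesis .
  qed
  have "card (UNIV :: 'a set) = card (\<Union>b\<in>range A. {x. A x = b})" by (rule arg_cong[of _ _ card]) auto
  also have "\<dots> \<le> (\<Sum>b\<in>range A. card {x. A x = b})" by (rule card_UN_le) simp
  also have "\<dots> \<le> (\<Sum>b\<in>range A. card {x. A x = 0})" by (rule sum_mono) (rule fiber)
  also have "\<dots> = card (range A) * card {x. A x = 0}" by simp
  finally show ?thesis .
qed

lemma card_range_linearized_ge:
  fixes A :: "'a::{field,finite} \<Rightarrow> 'a" and w :: "nat \<Rightarrow> 'a"
  assumes card: "card (UNIV :: 'a set) = q ^ N" and q: "q \<ge> 2" and "m < N"
    and "w m \<noteq> 0" and "\<And>j. m < j \<Longrightarrow> j < N \<Longrightarrow> w j = 0"
    and add: "\<And>x y. A (x + y) = A x + A y"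
    and A: "\<And>x. A x = (\<Sum>j<N. w j * x ^ (q ^ j))"
  shows "q ^ (N - m) \<le> card (range A)"
proof -
  have "q ^ (N - m) * q ^ m = card (UNIV :: 'a set)"
    using card \<open>m < N\<close> by (simp flip: power_add)
  also have "\<dots> \<le> card (range A) * card {x. A x = 0}"
    by (rule card_UNIV_le_card_range_mult_card_kernel) (rule add)
  also have "\<dots> \<le> card (range A) * q ^ m"
    using card_roots_linearized_le[of q m N w, OF q assms(3-5)] by (simp add: A)
  finally show ?thesis using q by simp
qed

lemma sum_lessThan_shift_cyclic:
  fixes t :: "nat \<Rightarrow> 'a::comm_monoid_add"
  assumes "t k = t 0"
  shows "(\<Sum>i<k. t (Suc i)) = (\<Sum>i<k. t i)"
proof (cases k)
  case (Suc m)
  have "(\<Sum>i<k. t (Suc i)) = (\<Sum>i<m. t (Suc i)) + t 0" using Suc assms by simp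
  also have "\<dots> = (\<Sum>i<k. t i)" unfolding Suc sum.lessThan_Suc_shift by (simp add: add.commute)
  finally show ?thesis .
qed simp

lemma sum_lessThan_double:
  fixes t :: "nat \<Rightarrow> 'a::comm_monoid_add"
  shows "(\<Sum>j<2 * m. t j) = (\<Sum>i<m. t (2 * i) + t (2 * i + 1))"
  by (induction m) (simp_all add: algebra_simps)

lemma sum_lessThan_add:
  fixes t :: "nat \<Rightarrow> 'a::comm_monoid_add"
  shows "(\<Sum>j<m + m'. t j) = (\<Sum>j<m. t j) + (\<Sum>j<m'. t (m + j))"
  by (induction m') (simp_all add: algebra_simps)

lemma sum_lessThan_4k:
  fixes t :: "nat \<Rightarrow> 'a::comm_monoid_add"
  shows "(\<Sum>j<4 * k. t j) =
    (\<Sum>i<k. t (2 * i) + t (2 * i + 2 * k) + t (2 * i + 1) + t (2 * i + 2 * k + 1))"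
proof -
  have "(\<Sum>j<4 * k. t j) = (\<Sum>j<2 * (k + k). t j)"
    by (rule arg_cong[where f = "\<lambda>n. \<Sum>j<n. t j"]) simp
  also have "\<dots> = (\<Sum>i<k + k. t (2 * i) + t (2 * i + 1))"
    by (rule sum_lessThan_double)
  also have "\<dots> = (\<Sum>i<k. t (2 * i) + t (2 * i + 1)) + (\<Sum>i<k. t (2 * (k + i)) + t (2 * (k + i) + 1))"
    by (rule sum_lessThan_add)
  also have "\<dots> = (\<Sum>i<k. t (2 * i) + t (2 * i + 2 * k) + t (2 * i + 1) + t (2 * i + 2 * k + 1))"
    by (simp add: sum.distrib[symmetric] algebra_simps)
  finally show ?thesis .
qed

lemma frobenius_sum_cyclic_fixed:
  fixes T :: "nat \<Rightarrow> 'a::field"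
  assumes add: "\<And>x y :: 'a. (x + y) ^ q = x ^ q + y ^ q"
    and step: "\<And>i. T i ^ (q ^ 2) = T (Suc i)" and "T k = T 0"
  shows "(\<Sum>i<k. T i) ^ (q ^ 2) = (\<Sum>i<k. T i)"
  using sum_lessThan_shift_cyclic[of T k] assms
  by (simp add: frobenius_iter_sum[OF add] step)

section \<open>The trace to GF(q^2) and the quadratic form g\<close>

text \<open>The trace from GF(q^4k) to GF(q^2): the sum of \<open>y^(q^j)\<close> over the even \<open>j < 4k\<close>.\<close>

definition trace_Fq2 :: "nat \<Rightarrow> nat \<Rightarrow> 'a::field \<Rightarrow> 'a" where
  "trace_Fq2 q k y = (\<Sum>i<k. y ^ (q ^ (2 * i)) + y ^ (q ^ (2 * i + 2 * k)))"

lemma trace_Fq2_linearized: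
  "trace_Fq2 q k y = (\<Sum>j<4 * k. (if even j then 1 else 0) * y ^ (q ^ j))"
  by (simp add: trace_Fq2_def sum_lessThan_4k)

lemma power_power_shift: "((y :: 'a::monoid_mult) ^ (q ^ j)) ^ (q ^ i) = y ^ (q ^ (j + i))"
  by (simp add: power_mult[symmetric] power_add)

lemma g_poly_eq_sum_lessThan:
  "g_poly q k (z :: 'a::field) = (\<Sum>i<k. z ^ (q ^ (2 * i)) * z ^ (q ^ (2 * i + 2 * k)))"
  unfolding g_poly_def
  by (rule sum.reindex_bij_witness[of _ Suc "\<lambda>i. i - 1"]) (auto simp: power_add)

context
  fixes q :: nat
  assumes add: "\<And>x y :: 'a::field. (x + y) ^ q = x ^ q + y ^ q"
begin

lemma trace_Fq2_add: "trace_Fq2 q k (x + y) = trace_Fq2 q k x + trace_Fq2 q k (y :: 'a)"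
  by (simp add: trace_Fq2_def frobenius_iter_add[OF add] sum.distrib[symmetric] algebra_simps)

lemma trace_Fq2_diff: "trace_Fq2 q k (x - y) = trace_Fq2 q k x - trace_Fq2 q k (y :: 'a)"
  by (simp add: trace_Fq2_def frobenius_iter_diff[OF add] sum_subtractf[symmetric] algebra_simps)

lemma power_trace_Fq2:
  "trace_Fq2 q k (y :: 'a) ^ q = (\<Sum>i<k. y ^ (q ^ (2 * i + 1)) + y ^ (q ^ (2 * i + 2 * k + 1)))"
proof -
  have "trace_Fq2 q k y ^ (q ^ 1) = (\<Sum>i<k. (y ^ (q ^ (2 * i)) + y ^ (q ^ (2 * i + 2 * k))) ^ (q ^ 1))"
    unfolding trace_Fq2_def by (rule frobenius_iter_sum[OF add])
  also have "\<dots> = (\<Sum>i<k. y ^ (q ^ (2 * i + 1)) + y ^ (q ^ (2 * i + 2 * k + 1)))"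
    by (simp only: frobenius_iter_add[OF add] power_power_shift)
  finally show ?thesis by simp
qed

lemma trace_Fq2_power: "trace_Fq2 q k ((y :: 'a) ^ q) = trace_Fq2 q k y ^ q"
  unfolding power_trace_Fq2 by (simp add: trace_Fq2_def power_mult[symmetric])

lemma trace_ext_eq_trace_Fq2: "trace_ext q (4 * k) (y :: 'a) = trace_Fq2 q k y + trace_Fq2 q k y ^ q"
  unfolding trace_ext_def sum_lessThan_4k power_trace_Fq2 unfolding trace_Fq2_def
  by (simp add: sum.distrib[symmetric] algebra_simps)

lemma g_poly_add_Fq2:
  assumes e: "e ^ (q ^ 2) = e"
  shows "g_poly q k (z + e) = g_poly q k z + e * trace_Fq2 q k z + of_nat k * (e :: 'a) ^ 2"
proof -
  have e_even: "e ^ (q ^ (2 * m)) = e" for m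
    using power_power_fixed[OF e, of m] by (simp add: power_mult)
  have "g_poly q k (z + e) = (\<Sum>i<k. (z ^ (q ^ (2 * i)) + e) * (z ^ (q ^ (2 * i + 2 * k)) + e))"
    unfolding g_poly_eq_sum_lessThan frobenius_iter_add[OF add]
    using e_even[of "_ + k"] e_even by (simp add: algebra_simps)
  also have "\<dots> = (\<Sum>i<k. z ^ (q ^ (2 * i)) * z ^ (q ^ (2 * i + 2 * k))
      + e * (z ^ (q ^ (2 * i)) + z ^ (q ^ (2 * i + 2 * k))) + e ^ 2)"
    by (simp add: algebra_simps power2_eq_square)
  also have "\<dots> = (\<Sum>i<k. z ^ (q ^ (2 * i)) * z ^ (q ^ (2 * i + 2 * k)))
      + e * (\<Sum>i<k. z ^ (q ^ (2 * i)) + z ^ (q ^ (2 * i + 2 * k))) + (\<Sum>i<k. e ^ 2)"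
    by (simp only: sum.distrib sum_distrib_left distrib_left add.assoc)
  also have "\<dots> = g_poly q k z + e * trace_Fq2 q k z + of_nat k * e ^ 2"
    by (simp add: g_poly_eq_sum_lessThan trace_Fq2_def)
  finally show ?thesis .
qed

lemma trace_Fq2_frobenius_diff_linearized:
  "trace_Fq2 q k (y :: 'a) ^ q - trace_Fq2 q k y = (\<Sum>j<4 * k. (if even j then - 1 else 1) * y ^ (q ^ j))"
  unfolding power_trace_Fq2 unfolding sum_lessThan_4k trace_Fq2_def
  by (simp add: sum_subtractf[symmetric] algebra_simps)

context
  fixes k :: nat
  assumes fixed: "\<And>x :: 'a. x ^ (q ^ (4 * k)) = x"
begin

lemma trace_Fq2_in_Fq2: "trace_Fq2 q k (y :: 'a) ^ (q ^ 2) = trace_Fq2 q k y"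
  unfolding trace_Fq2_def
proof (rule frobenius_sum_cyclic_fixed[OF add])
  show "(y ^ (q ^ (2 * i)) + y ^ (q ^ (2 * i + 2 * k))) ^ (q ^ 2) =
      y ^ (q ^ (2 * Suc i)) + y ^ (q ^ (2 * Suc i + 2 * k))" for i
    by (simp add: frobenius_iter_add[OF add] power_power_shift algebra_simps)
  show "y ^ (q ^ (2 * k)) + y ^ (q ^ (2 * k + 2 * k)) = y ^ (q ^ (2 * 0)) + y ^ (q ^ (2 * 0 + 2 * k))"
    using fixed[of y] by (simp add: add.commute)
qed

lemma g_poly_in_Fq2: "g_poly q k (z :: 'a) ^ (q ^ 2) = g_poly q k z"
  unfolding g_poly_eq_sum_lessThan
proof (rule frobenius_sum_cyclic_fixed[OF add])
  show "(z ^ (q ^ (2 * i)) * z ^ (q ^ (2 * i + 2 * k))) ^ (q ^ 2) =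
      z ^ (q ^ (2 * Suc i)) * z ^ (q ^ (2 * Suc i + 2 * k))" for i
    by (simp add: power_mult_distrib power_power_shift algebra_simps)
  show "z ^ (q ^ (2 * k)) * z ^ (q ^ (2 * k + 2 * k)) = z ^ (q ^ (2 * 0)) * z ^ (q ^ (2 * 0 + 2 * k))"
    using fixed[of z] by (simp add: mult.commute)
qed

end

end

section \<open>The permutation criterion\<close>

locale g_perm_setting =
  fixes q k :: nat and a \<delta> :: "'a::{field,finite}"
  assumes power_q_add: "\<And>x y :: 'a. (x + y) ^ q = x ^ q + y ^ q"
    and q_ge_2: "q \<ge> 2" and k_ge_1: "k \<ge> 1"
    and card_UNIV: "card (UNIV :: 'a set) = q ^ (4 * k)"
    and a_in_Fq: "a ^ q = a" and a_nonzero: "a \<noteq> 0"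
begin

definition f :: "'a \<Rightarrow> 'a" where
  "f x = g_poly q k (x ^ q - x + \<delta>) + a * x"

abbreviation S :: "'a \<Rightarrow> 'a" where
  "S \<equiv> trace_Fq2 q k"

lemma power_q_diff: "((x :: 'a) - y) ^ q = x ^ q - y ^ q"
  using frobenius_iter_diff[OF power_q_add, of x y 1] by simp

lemma power_q_minus: "(- (x :: 'a)) ^ q = - (x ^ q)"
  using power_q_diff[of 0 x] q_ge_2 by simp

lemma power_q_power_q: "((x :: 'a) ^ q) ^ q = x ^ (q ^ 2)"
  by (simp add: power_mult power2_eq_square)

lemma power_q_4k: "(x :: 'a) ^ (q ^ (4 * k)) = x"
  using field_power_card_eq_self[of x] card_UNIV by simp

lemma Fq2_frobenius_diff:
  assumes "c ^ (q ^ 2) = (c :: 'a)"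
  shows "(c ^ q - c) ^ q = - (c ^ q - c)"
  using assms by (simp add: power_q_diff power_q_power_q)

lemma f_add_Fq2:
  assumes c: "c ^ (q ^ 2) = (c :: 'a)"
  shows "f (y + c) = f y + (c ^ q - c) * (S y ^ q - S y + S \<delta>) + of_nat k * (c ^ q - c) ^ 2 + a * c"
proof -
  define e where "e = c ^ q - c"
  have "e ^ q = - e"
    unfolding e_def by (rule Fq2_frobenius_diff[OF c])
  then have e: "e ^ (q ^ 2) = e"
    by (simp add: power_q_minus flip: power_q_power_q)
  define z where "z = y ^ q - y + \<delta>"
  have shift: "(y + c) ^ q - (y + c) + \<delta> = z + e"
    by (simp add: z_def e_def power_q_add)
  have Sz: "S z = S y ^ q - S y + S \<delta>"
    by (simp add: z_def trace_Fq2_add[OF power_q_add] trace_Fq2_diff[OF power_q_add]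
        trace_Fq2_power[OF power_q_add])
  have "f (y + c) = g_poly q k (z + e) + a * (y + c)"
    unfolding f_def shift ..
  also have "\<dots> = f y + e * S z + of_nat k * e ^ 2 + a * c"
    using g_poly_add_Fq2[OF power_q_add e, of k z] by (simp add: f_def z_def algebra_simps)
  finally show ?thesis
    by (simp only: Sz e_def)
qed

lemma f_eq_imp_diff_in_Fq2:
  assumes "f x = f y"
  shows "(x - y) ^ (q ^ 2) = x - y"
proof -
  have g: "a * (x - y) = g_poly q k (y ^ q - y + \<delta>) - g_poly q k (x ^ q - x + \<delta>)"
    using assms by (simp add: f_def algebra_simps)
  have "a * (x - y) ^ (q ^ 2) = (a * (x - y)) ^ (q ^ 2)"
    using power_power_fixed[OF a_in_Fq, of 2] by (simp add: power_mult_distrib)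
  also have "\<dots> = a * (x - y)"
    unfolding g frobenius_iter_diff[OF power_q_add] g_poly_in_Fq2[OF power_q_add power_q_4k] ..
  finally show ?thesis using a_nonzero by simp
qed

lemma collision_imp_trace_eq:
  assumes c: "c ^ (q ^ 2) = (c :: 'a)" and "f (y + c) = f y"
  shows "(c ^ q - c) * (trace_ext q (4 * k) \<delta> - a) = 0"
proof -
  define e where "e = c ^ q - c"
  define u where "u = S y ^ q - S y + S \<delta>"
  have collision: "e * u + of_nat k * e ^ 2 + a * c = 0"
    using f_add_Fq2[OF c, of y] \<open>f (y + c) = f y\<close> by (simp add: e_def u_def add.assoc)
  have e_q: "e ^ q = - e"
    unfolding e_def by (rule Fq2_frobenius_diff[OF c])
  have c_q: "c ^ q = c + e"
    by (simp add: e_def)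
  have u_q: "u ^ q = S y - S y ^ q + S \<delta> ^ q"
    using trace_Fq2_in_Fq2[OF power_q_add power_q_4k, of y]
    by (simp add: u_def power_q_add power_q_diff power_q_power_q)
  have e2_q: "(e ^ 2) ^ q = (e ^ q) ^ 2"
    by (simp flip: power_mult add: mult.commute)
  have "(e * u + of_nat k * e ^ 2 + a * c) ^ q = e ^ q * u ^ q + of_nat k ^ q * (e ^ 2) ^ q + a ^ q * c ^ q"
    unfolding power_q_add power_mult_distrib ..
  also have "\<dots> = - e * u ^ q + of_nat k * e ^ 2 + a * (c + e)"
    by (simp add: e2_q e_q c_q frobenius_of_nat[OF power_q_add] a_in_Fq)
  finally have conjugate: "- e * u ^ q + of_nat k * e ^ 2 + a * (c + e) = 0"
    using collision q_ge_2 by (simp add: power_0_left)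
  txt \<open>Subtracting the conjugate equation eliminates everything but the trace.\<close>
  have "e * (S \<delta> + S \<delta> ^ q - a)
      = (e * u + of_nat k * e ^ 2 + a * c) - (- e * u ^ q + of_nat k * e ^ 2 + a * (c + e))"
    unfolding u_q unfolding u_def by (simp add: algebra_simps)
  also have "\<dots> = 0"
    unfolding collision conjugate by simp
  finally show ?thesis
    by (simp add: e_def trace_ext_eq_trace_Fq2[OF power_q_add])
qed

lemma inj_f:
  assumes "trace_ext q (4 * k) \<delta> \<noteq> a"
  shows "inj f"
proof (rule injI, rule ccontr)
  fix x y assume "f x = f y" "x \<noteq> y"
  define c where "c = x - y"
  have c: "c ^ (q ^ 2) = c"
    unfolding c_def by (rule f_eq_imp_diff_in_Fq2) fact
  have collision: "f (y + c) = f y"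
    using \<open>f x = f y\<close> by (simp add: c_def)
  then have "c ^ q = c"
    using collision_imp_trace_eq[OF c] assms by simp
  then have "f (y + c) = f y + a * c"
    using f_add_Fq2[OF c, of y] by simp
  then show False
    using collision a_nonzero \<open>x \<noteq> y\<close> by (simp add: c_def)
qed

lemma ex_Fq2_not_Fq:
  obtains c :: 'a where "c ^ (q ^ 2) = c" and "c ^ q \<noteq> c"
proof -
  have "q ^ (4 * k - (4 * k - 2)) \<le> card (range S)"
  proof (rule card_range_linearized_ge[OF card_UNIV q_ge_2])
    show "S x = (\<Sum>j<4 * k. (if even j then 1 else 0) * x ^ (q ^ j))" for x
      by (rule trace_Fq2_linearized)
    show "(if even j then 1 else 0) = (0 :: 'a)" if "4 * k - 2 < j" "j < 4 * k" for j
    proof -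
      have "j = 4 * k - 1" using that by simp
      then show ?thesis using k_ge_1 by auto
    qed
  qed (use k_ge_1 trace_Fq2_add[OF power_q_add] in auto)
  then have "q ^ 2 \<le> card (range S)"
    using k_ge_1 by simp
  moreover have "card {x :: 'a. x ^ q = x} \<le> q"
    using card_power_eq_scalar_mult_le[OF q_ge_2, of "1 :: 'a"] by simp
  moreover have "q < q ^ 2"
    using q_ge_2 by (simp add: power2_eq_square)
  ultimately have "\<not> range S \<subseteq> {x. x ^ q = x}"
    using card_mono[of "{x :: 'a. x ^ q = x}" "range S"] by fastforce
  then obtain y where "S y ^ q \<noteq> S y" by auto
  then show ?thesis
    by (intro that[of "S y"]) (simp_all add: trace_Fq2_in_Fq2[OF power_q_add power_q_4k])
qed

lemma range_trace_Fq2_frobenius_diff: "range (\<lambda>y. S y ^ q - S y) = {w. w ^ q = - w}"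
proof (rule card_seteq)
  show "range (\<lambda>y. S y ^ q - S y) \<subseteq> {w. w ^ q = - w}"
    using trace_Fq2_in_Fq2[OF power_q_add power_q_4k] by (auto simp: power_q_diff power_q_power_q)
  have "q ^ (4 * k - (4 * k - 1)) \<le> card (range (\<lambda>y. S y ^ q - S y))"
  proof (rule card_range_linearized_ge[OF card_UNIV q_ge_2])
    show "S x ^ q - S x = (\<Sum>j<4 * k. (if even j then - 1 else 1) * x ^ (q ^ j))" for x
      by (rule trace_Fq2_frobenius_diff_linearized[OF power_q_add])
    show "S (x + y) ^ q - S (x + y) = S x ^ q - S x + (S y ^ q - S y)" for x y
      by (simp add: trace_Fq2_add[OF power_q_add] power_q_add)
    have "odd (4 * k - 1)" using k_ge_1 by presburger
    then show "(if even (4 * k - 1) then - 1 else 1) \<noteq> (0 :: 'a)" by simp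
  qed (use k_ge_1 in auto)
  moreover have "card {w :: 'a. w ^ q = - w} \<le> q"
    using card_power_eq_scalar_mult_le[OF q_ge_2, of "- 1 :: 'a"] by simp
  ultimately show "card {w :: 'a. w ^ q = - w} \<le> card (range (\<lambda>y. S y ^ q - S y))"
    using k_ge_1 by simp
qed simp

lemma not_inj_f:
  assumes "trace_ext q (4 * k) \<delta> = a"
  shows "\<not> inj f"
proof
  assume "inj f"
  obtain c :: 'a where c: "c ^ (q ^ 2) = c" "c ^ q \<noteq> c" by (rule ex_Fq2_not_Fq)
  define e where "e = c ^ q - c"
  have "e \<noteq> 0" using c(2) by (simp add: e_def)
  have e_q: "e ^ q = - e"
    unfolding e_def by (rule Fq2_frobenius_diff[OF c(1)])
  have c_q: "c ^ q = c + e"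
    by (simp add: e_def)
  txt \<open>\<open>R\<close> is the value of \<open>S(y)^q - S(y) + S(\<delta>)\<close> for which \<open>f(y + c) = f(y)\<close>.\<close>
  define R where "R = - (of_nat k * e + a * c / e)"
  have "R ^ q = - (of_nat k ^ q * e ^ q + a ^ q * c ^ q / e ^ q)"
    unfolding R_def power_q_minus power_q_add power_mult_distrib power_divide ..
  also have "\<dots> = of_nat k * e + a * c / e + a"
    using \<open>e \<noteq> 0\<close> by (simp add: frobenius_of_nat[OF power_q_add] a_in_Fq e_q c_q distrib_left add_divide_distrib)
  finally have R_q: "R ^ q = a - R"
    by (simp add: R_def)
  have "(R - S \<delta>) ^ q = R ^ q - S \<delta> ^ q"
    by (rule power_q_diff)
  also have "\<dots> = - (R - S \<delta>)"
    unfolding R_q assms[symmetric] trace_ext_eq_trace_Fq2[OF power_q_add] by (simp add: algebra_simps)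
  finally obtain y where y: "S y ^ q - S y = R - S \<delta>"
    using range_trace_Fq2_frobenius_diff by (metis (mono_tags, lifting) mem_Collect_eq rangeE)
  have "f (y + c) = f y + (e * R + of_nat k * e ^ 2 + a * c)"
    using f_add_Fq2[OF c(1), of y] y by (simp add: e_def add.assoc)
  also have "e * R + of_nat k * e ^ 2 + a * c = 0"
    using \<open>e \<noteq> 0\<close> by (simp add: R_def field_simps power2_eq_square)
  finally have "f (y + c) = f y" by simp
  then have "c = 0" using \<open>inj f\<close> by (simp add: inj_eq)
  then show False using c(2) q_ge_2 by simp
qed

lemma bij_f_iff: "bij f \<longleftrightarrow> trace_ext q (4 * k) \<delta> \<noteq> a"
  using inj_f not_inj_f finite_UNIV_inj_surj[of f] by (auto simp: bij_def)

end

theorem mainTheorem8: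
  fixes q k n :: nat and \<delta> a :: "'a::{field,finite}"
  assumes "primepow q"
    and "k \<ge> 1"
    and "n = 4 * k"
    and "card (UNIV :: 'a set) = q ^ n"
    and "a \<in> subfield_Fq q"
    and "a \<noteq> 0"
  shows "bij (\<lambda>x. g_poly q k (x ^ q - x + \<delta>) + a * x) \<longleftrightarrow> trace_ext q n \<delta> \<noteq> a"
proof -
  interpret g_perm_setting q k a \<delta>
  proof
    show "(x + y) ^ q = x ^ q + y ^ q" for x y :: 'a
      using primepow_card_power_add assms(1,4) by blast
    show "q \<ge> 2" using primepow_gt_Suc_0[OF assms(1)] by simp
  qed (use assms in \<open>simp_all add: subfield_Fq_def\<close>)
  have "(\<lambda>x. g_poly q k (x ^ q - x + \<delta>) + a * x) = f"
    by (simp add: f_def fun_eq_iff)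
  then show ?thesis using bij_f_iff assms(3) by simp
qed

end
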